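(* Let $G$ be a connected graph with $n\ge2$ vertices, $m\ge1$ edges, maximum degree $\Delta$ and minimum degree $\delta$. Let $c=m(n^3-n^2-2mn+4m)$. If $\gamma_n\ge\frac{\sqrt c}{2n}$, then $$QE(G)\ \ge\ \frac{2\sqrt2}{3}\sqrt{\Big[2m+\tfrac12(\Delta-\delta)^2\Big]n},$$ with equality if and only if $G\cong K_3$.
   Context: All graphs are finite, simple and undirected. For a graph $G$ with $n$ vertices and $m$ edges, let $q_1\ge\cdots\ge q_n\ge0$ be the eigenvalues of the signless Laplacian $Q(G)=D(G)+A(G)$ ($D(G)$ the diagonal degree matrix, $A(G)$ the adjacency matrix). The signless Laplacian energy is $QE(G)=\sum_{i=1}^n|q_i-\frac{2m}{n}|$. Let $\gamma_1\ge\gamma_2\ge\cdots\ge\gamma_n\ge0$ denote the numbers $|q_i-\frac{2m}{n}|$, $i=1,\dots,n$, arranged in nonincreasing order. *)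

theory Defs
  imports "Jordan_Normal_Form.Char_Poly" "HOL-Library.Multiset"
begin

text \<open>A finite simple graph on the vertex set {0..<n}, given by an adjacency
relation E (only its values on {0..<n} matter).\<close>

definition simple_graph :: "nat \<Rightarrow> (nat \<Rightarrow> nat \<Rightarrow> bool) \<Rightarrow> bool" where
  "simple_graph n E \<longleftrightarrow> (\<forall>i<n. \<forall>j<n. E i j \<longleftrightarrow> E j i) \<and> (\<forall>i<n. \<not> E i i)"

definition num_edges :: "nat \<Rightarrow> (nat \<Rightarrow> nat \<Rightarrow> bool) \<Rightarrow> nat" where
  "num_edges n E = card {(i, j). i < j \<and> j < n \<and> E i j}"

definition degree :: "nat \<Rightarrow> (nat \<Rightarrow> nat \<Rightarrow> bool) \<Rightarrow> nat \<Rightarrow> nat" where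
  "degree n E i = card {j. j < n \<and> E i j}"

definition max_degree :: "nat \<Rightarrow> (nat \<Rightarrow> nat \<Rightarrow> bool) \<Rightarrow> nat" where
  "max_degree n E = Max (degree n E ` {0..<n})"

definition min_degree :: "nat \<Rightarrow> (nat \<Rightarrow> nat \<Rightarrow> bool) \<Rightarrow> nat" where
  "min_degree n E = Min (degree n E ` {0..<n})"

definition connected_graph :: "nat \<Rightarrow> (nat \<Rightarrow> nat \<Rightarrow> bool) \<Rightarrow> bool" where
  "connected_graph n E \<longleftrightarrow>
     (\<forall>i<n. \<forall>j<n. (\<lambda>x y. x < n \<and> y < n \<and> E x y)\<^sup>*\<^sup>* i j)"

definition signless_laplacian :: "nat \<Rightarrow> (nat \<Rightarrow> nat \<Rightarrow> bool) \<Rightarrow> real mat" where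
  "signless_laplacian n E =
     mat n n (\<lambda>(i, j). (if i = j then real (degree n E i) else 0) + (if E i j then 1 else 0))"

text \<open>Multiset of eigenvalues (with algebraic multiplicity) of a real matrix whose
characteristic polynomial splits over the reals (true for symmetric matrices).\<close>
definition real_spectrum :: "real mat \<Rightarrow> real multiset" where
  "real_spectrum A = (THE M. char_poly A = prod_mset (image_mset (\<lambda>a. [:- a, 1:]) M))"

definition sl_eigenvalues :: "nat \<Rightarrow> (nat \<Rightarrow> nat \<Rightarrow> bool) \<Rightarrow> real multiset" where
  "sl_eigenvalues n E = real_spectrum (signless_laplacian n E)"

text \<open>The numbers |q_i - 2m/n| as a multiset, and gamma_1 \<ge> ... \<ge> gamma_n.\<close>
definition gamma_mset :: "nat \<Rightarrow> (nat \<Rightarrow> nat \<Rightarrow> bool) \<Rightarrow> real multiset" where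
  "gamma_mset n E = image_mset (\<lambda>q. \<bar>q - 2 * real (num_edges n E) / real n\<bar>) (sl_eigenvalues n E)"

definition gamma :: "nat \<Rightarrow> (nat \<Rightarrow> nat \<Rightarrow> bool) \<Rightarrow> nat \<Rightarrow> real" where
  "gamma n E k = rev (sorted_list_of_multiset (gamma_mset n E)) ! (k - 1)"

definition QE :: "nat \<Rightarrow> (nat \<Rightarrow> nat \<Rightarrow> bool) \<Rightarrow> real" where
  "QE n E = sum_mset (gamma_mset n E)"

definition complete_graph :: "nat \<Rightarrow> nat \<Rightarrow> bool" where
  "complete_graph i j \<longleftrightarrow> i \<noteq> j"

definition graph_iso ::
  "nat \<Rightarrow> (nat \<Rightarrow> nat \<Rightarrow> bool) \<Rightarrow> nat \<Rightarrow> (nat \<Rightarrow> nat \<Rightarrow> bool) \<Rightarrow> bool" where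
  "graph_iso n E n' E' \<longleftrightarrow> (\<exists>f. bij_betw f {0..<n} {0..<n'} \<and>
      (\<forall>i<n. \<forall>j<n. E i j \<longleftrightarrow> E' (f i) (f j)))"

end

theory Submission
  imports Defs "Jordan_Normal_Form.Schur_Decomposition"
begin

(* Let q_i be the signless Laplacian eigenvalues and mu_i = q_i - 2m/n. Since trace Q = 2m and
   trace Q^2 = sum d_i^2 + 2m, the mu_i sum to zero and sum mu_i^2 = sum d_i^2 + 2m - 4m^2/n.
   This is at least 2m + (Delta - delta)^2/2, and by de Caen's inequality
   sum d_i^2 <= m(n-2) + 2m^2/(n-1) it is at most c/(n(n-1)); with sum mu_i = 0 this gives
   |mu_i| <= sqrt c / n = 2t, while the hypothesis says |mu_i| >= gamma_n >= t := sqrt c / (2n).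
   For t <= |mu| <= 2t we have mu^2 <= 3t|mu| - 2t^2, hence sum mu_i^2 + 2nt^2 <= 3t QE, and
   AM-GM gives 9 QE^2 >= 8n sum mu_i^2 >= 8n (2m + (Delta - delta)^2/2).
   Equality forces sum mu_i^2 = 2nt^2 = c/(2n), which is compatible with the de Caen bound and
   with sum mu_i^2 >= 2m only for n = 3, and among graphs on three vertices only for K_3.
   Conversely, for K_3 we get t = 1, and three numbers in [1,2] summing to zero have absolute
   values summing to at most 4, which is the bound. *)

section \<open>Traces and spectra of symmetric matrices\<close>

definition mat_trace :: "'a::comm_ring_1 mat \<Rightarrow> 'a" where
  "mat_trace A = (\<Sum>i<dim_row A. A $$ (i, i))"

lemma mat_trace_mult_comm:
  assumes A: "A \<in> carrier_mat n m" and B: "B \<in> carrier_mat m n"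
  shows "mat_trace (A * B) = mat_trace (B * A)"
proof -
  have "mat_trace (A * B) = (\<Sum>i<n. \<Sum>k<m. A $$ (i, k) * B $$ (k, i))"
    unfolding mat_trace_def using A B by (auto simp: scalar_prod_def intro!: sum.cong)
  also have "\<dots> = (\<Sum>k<m. \<Sum>i<n. B $$ (k, i) * A $$ (i, k))"
    by (subst sum.swap) (simp add: mult.commute)
  also have "\<dots> = mat_trace (B * A)"
    unfolding mat_trace_def using A B by (auto simp: scalar_prod_def intro!: sum.cong)
  finally show ?thesis .
qed

lemma mat_trace_similar:
  assumes wit: "similar_mat_wit A B P Q" and A: "A \<in> carrier_mat n n"
  shows "mat_trace A = mat_trace B"
proof -
  from similar_mat_witD2[OF A wit] have B: "B \<in> carrier_mat n n" and P: "P \<in> carrier_mat n n"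
    and Q: "Q \<in> carrier_mat n n" and QP: "Q * P = 1\<^sub>m n" and AP: "A = P * B * Q" by auto
  have "mat_trace A = mat_trace (P * (B * Q))" using AP assoc_mult_mat[OF P B Q] by simp
  also have "\<dots> = mat_trace (B * Q * P)" using P B Q by (intro mat_trace_mult_comm) auto
  also have "B * Q * P = B" using assoc_mult_mat[OF B Q P] QP B by simp
  finally show ?thesis .
qed

lemma similar_mat_wit_square:
  assumes wit: "similar_mat_wit A B P Q" and A: "A \<in> carrier_mat n n"
  shows "similar_mat_wit (A * A) (B * B) P Q"
proof -
  from similar_mat_witD2[OF A wit] have B: "B \<in> carrier_mat n n" and P: "P \<in> carrier_mat n n"
    and Q: "Q \<in> carrier_mat n n" and QP: "Q * P = 1\<^sub>m n" and PQ: "P * Q = 1\<^sub>m n"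
    and AP: "A = P * B * Q" by auto
  have "A * A = P * B * (Q * P) * B * Q"
    unfolding AP using P B Q by (simp add: assoc_mult_mat[of _ n n _ n _ n])
  also have "\<dots> = P * (B * B) * Q"
    unfolding QP using P B Q by (simp add: assoc_mult_mat[of _ n n _ n _ n])
  finally show ?thesis
    unfolding similar_mat_wit_def Let_def using A B P Q PQ QP by auto
qed

lemma mat_trace_upper_triangular_square:
  assumes B: "B \<in> carrier_mat n n" and ut: "upper_triangular B"
  shows "mat_trace (B * B) = (\<Sum>i<n. (B $$ (i, i))\<^sup>2)"
proof -
  have off_diag: "B $$ (i, k) * B $$ (k, i) = 0" if "i < n" "k < n" "k \<noteq> i" for i k
    using ut B that unfolding upper_triangular_def by (cases "k < i") auto
  have "mat_trace (B * B) = (\<Sum>i<n. \<Sum>k<n. B $$ (i, k) * B $$ (k, i))"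
    unfolding mat_trace_def using B by (auto simp: scalar_prod_def intro!: sum.cong)
  also have "\<dots> = (\<Sum>i<n. (B $$ (i, i))\<^sup>2)"
    using off_diag by (intro sum.cong refl, subst sum.remove[of _ i for i])
      (auto simp: power2_eq_square intro!: sum.neutral)
  finally show ?thesis .
qed

lemma mat_trace_square_symmetric:
  assumes A: "A \<in> carrier_mat n n" and sym: "\<And>i j. i < n \<Longrightarrow> j < n \<Longrightarrow> A $$ (i, j) = A $$ (j, i)"
  shows "mat_trace (A * A) = (\<Sum>i<n. \<Sum>j<n. (A $$ (i, j))\<^sup>2)"
  unfolding mat_trace_def using A sym
  by (auto simp: scalar_prod_def power2_eq_square intro!: sum.cong)

lemma char_poly_root_sums:
  fixes A :: "'a::conjugatable_ordered_field mat"
  assumes A: "A \<in> carrier_mat n n" and cp: "char_poly A = (\<Prod>e\<leftarrow>es. [:- e, 1:])"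
  shows "length es = n" "sum_list es = mat_trace A" "(\<Sum>e\<leftarrow>es. e\<^sup>2) = mat_trace (A * A)"
proof -
  obtain B P Q where "schur_decomposition A es = (B, P, Q)" by (metis prod_cases3)
  with schur_decomposition[OF A cp] have wit: "similar_mat_wit A B P Q"
    and ut: "upper_triangular B" and diag: "diag_mat B = es" by blast+
  from similar_mat_witD2[OF A wit] have B: "B \<in> carrier_mat n n" by auto
  show len: "length es = n" using B diag unfolding diag_mat_def by auto
  have nth_es: "es ! i = B $$ (i, i)" if "i < n" for i
    using B diag that unfolding diag_mat_def by auto
  have "sum_list es = mat_trace B"
    unfolding sum_list_sum_nth mat_trace_def using B len nth_es
    by (auto simp: atLeast0LessThan intro!: sum.cong)
  also have "\<dots> = mat_trace A" by (rule mat_trace_similar[OF wit A, symmetric])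
  finally show "sum_list es = mat_trace A" .
  have "(\<Sum>e\<leftarrow>es. e\<^sup>2) = mat_trace (B * B)"
    unfolding mat_trace_upper_triangular_square[OF B ut] sum_list_sum_nth
    using len nth_es by (auto simp: atLeast0LessThan intro!: sum.cong)
  also have "\<dots> = mat_trace (A * A)"
    using A by (intro mat_trace_similar[OF similar_mat_wit_square[OF wit A], symmetric]) auto
  finally show "(\<Sum>e\<leftarrow>es. e\<^sup>2) = mat_trace (A * A)" .
qed

lemma order_prod_mset_linear_factors:
  "Polynomial.order x (\<Prod>a\<in>#M. [:- a, 1:]) = count M (x :: 'a::idom)"
proof (induction M)
  case empty
  then show ?case by (simp add: order_0I)
next
  case (add a M)
  have "(\<Prod>a\<in>#M. [:- a, 1:]) \<noteq> 0" by (auto simp: prod_mset_zero_iff)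
  then have nz: "[:- a, 1:] * (\<Prod>a\<in>#M. [:- a, 1:]) \<noteq> 0" by (simp only: mult_eq_0_iff) simp
  moreover have "Polynomial.order x [:- a, 1:] = (if x = a then 1 else 0)"
    using order_power_n_n[of a 1] by (auto intro!: order_0I)
  ultimately show ?case
    using add by (simp only: image_mset_add_mset prod_mset.add_mset order_mult[OF nz]) simp
qed

lemma real_spectrum_eqI:
  assumes "char_poly A = (\<Prod>a\<in>#M. [:- a, 1:])"
  shows "real_spectrum A = M"
  unfolding real_spectrum_def
proof (rule the_equality)
  fix M' assume "char_poly A = (\<Prod>a\<in>#M'. [:- a, 1:])"
  with assms show "M' = M"
    by (intro multiset_eqI) (metis order_prod_mset_linear_factors)
qed (fact assms)

lemma symmetric_real_mat_eigenvalue_real: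
  fixes A :: "real mat"
  assumes A: "A \<in> carrier_mat n n" and sym: "\<And>i j. i < n \<Longrightarrow> j < n \<Longrightarrow> A $$ (i, j) = A $$ (j, i)"
    and ev: "eigenvalue (map_mat complex_of_real A) a"
  shows "a \<in> \<real>"
proof -
  let ?C = "map_mat complex_of_real A"
  from ev obtain v where v: "v \<in> carrier_vec n" "v \<noteq> 0\<^sub>v n" "?C *\<^sub>v v = a \<cdot>\<^sub>v v"
    unfolding eigenvalue_def eigenvector_def using A by auto
  have row: "(\<Sum>j<n. of_real (A $$ (i, j)) * v $ j) = a * v $ i" if "i < n" for i
  proof -
    have "(?C *\<^sub>v v) $ i = a * v $ i" using v that by simp
    then show ?thesis using that A v(1) by (auto simp: scalar_prod_def atLeast0LessThan mult.commute)
  qed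
  \<comment> \<open>\<open>s = v\<^sup>* A v\<close> is real because A is real symmetric, and it equals \<open>a \<parallel>v\<parallel>\<^sup>2\<close>\<close>
  define s where "s = (\<Sum>i<n. \<Sum>j<n. cnj (v $ i) * of_real (A $$ (i, j)) * v $ j)"
  define r where "r = (\<Sum>i<n. (cmod (v $ i))\<^sup>2)"
  have "s = (\<Sum>i<n. cnj (v $ i) * (\<Sum>j<n. of_real (A $$ (i, j)) * v $ j))"
    unfolding s_def by (simp add: sum_distrib_left mult.assoc)
  also have "\<dots> = a * (\<Sum>i<n. cnj (v $ i) * v $ i)"
    by (simp add: row sum_distrib_left mult.left_commute)
  also have "(\<Sum>i<n. cnj (v $ i) * v $ i) = of_real r"
    unfolding r_def of_real_sum by (intro sum.cong refl) (metis complex_norm_square mult.commute of_real_power)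
  finally have s_eq: "s = a * of_real r" .
  have "cnj s = (\<Sum>i<n. \<Sum>j<n. v $ i * of_real (A $$ (i, j)) * cnj (v $ j))"
    unfolding s_def by simp
  also have "\<dots> = (\<Sum>j<n. \<Sum>i<n. v $ i * of_real (A $$ (i, j)) * cnj (v $ j))"
    by (rule sum.swap)
  also have "\<dots> = s"
    unfolding s_def by (intro sum.cong refl) (simp add: sym mult.commute mult.left_commute)
  finally have "s \<in> \<real>" by (simp add: Reals_cnj_iff)
  obtain i where "i < n" "v $ i \<noteq> 0"
    using v by (metis carrier_vecD eq_vecI index_zero_vec)
  then have "r > 0" unfolding r_def by (intro sum_pos2[of _ i]) auto
  with s_eq have "a = s / of_real r" by simp
  with \<open>s \<in> \<real>\<close> show ?thesis by simp
qed

lemma symmetric_real_mat_spectrum: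
  fixes A :: "real mat"
  assumes A: "A \<in> carrier_mat n n" and sym: "\<And>i j. i < n \<Longrightarrow> j < n \<Longrightarrow> A $$ (i, j) = A $$ (j, i)"
  obtains rs where "real_spectrum A = mset rs" "length rs = n"
    "sum_list rs = mat_trace A" "(\<Sum>r\<leftarrow>rs. r\<^sup>2) = mat_trace (A * A)"
proof -
  interpret of_real_poly: map_poly_inj_idom_hom complex_of_real ..
  let ?C = "map_mat complex_of_real A"
  obtain as where cpC: "char_poly ?C = (\<Prod>a\<leftarrow>as. [:- a, 1:])"
    using char_poly_factorized[of ?C n] A by auto
  have "a \<in> \<real>" if "a \<in> set as" for a
  proof (rule symmetric_real_mat_eigenvalue_real[OF A sym])
    have "poly (char_poly ?C) a = 0" unfolding cpC using that by (rule linear_poly_root)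
    then show "eigenvalue ?C a" using eigenvalue_root_char_poly[of ?C n] A by simp
  qed
  then have as_eq: "as = map complex_of_real (map Re as)"
    by (simp add: map_idI complex_is_Real_iff complex_eq_iff)
  define rs where "rs = map Re as"
  have "map_poly complex_of_real (char_poly A) = char_poly ?C"
    by (rule of_real_hom.char_poly_hom[OF A, symmetric])
  also have "\<dots> = map_poly complex_of_real (\<Prod>r\<leftarrow>rs. [:- r, 1:])"
    unfolding cpC rs_def by (subst as_eq) (simp add: of_real_poly.hom_prod_list o_def)
  finally have cp: "char_poly A = (\<Prod>r\<leftarrow>rs. [:- r, 1:])" by (rule of_real_poly.injectivity)
  show thesis
  proof (rule that)
    show "real_spectrum A = mset rs"
      by (rule real_spectrum_eqI) (simp add: cp prod_mset_prod_list flip: mset_map)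
  qed (use char_poly_root_sums[OF A cp] in auto)
qed

section \<open>Degree sums and de Caen's inequality\<close>

definition adj :: "(nat \<Rightarrow> nat \<Rightarrow> bool) \<Rightarrow> nat \<Rightarrow> nat \<Rightarrow> real" where
  "adj E i j = (if E i j then 1 else 0)"

definition non_adj :: "(nat \<Rightarrow> nat \<Rightarrow> bool) \<Rightarrow> nat \<Rightarrow> nat \<Rightarrow> real" where
  "non_adj E i j = (if i \<noteq> j \<and> \<not> E i j then 1 else 0)"

lemma simple_graphD:
  assumes "simple_graph n E" "i < n" "j < n"
  shows "E i j \<longleftrightarrow> E j i" "\<not> E i i"
  using assms unfolding simple_graph_def by auto

lemma degree_eq_sum_adj: "real (degree n E i) = (\<Sum>j<n. adj E i j)"
proof -
  have "{j. j < n \<and> E i j} = {j \<in> {..<n}. E i j}" by auto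
  then show ?thesis
    unfolding degree_def adj_def by (simp add: sum.inter_filter[symmetric])
qed

lemma sum_non_adj:
  assumes sg: "simple_graph n E" and i: "i < n"
  shows "(\<Sum>j<n. non_adj E i j) = real n - 1 - real (degree n E i)"
proof -
  have "non_adj E i j = 1 - (if j = i then 1 else 0) - adj E i j" if "j < n" for j
    using simple_graphD[OF sg i that] unfolding non_adj_def adj_def by auto
  then have "(\<Sum>j<n. non_adj E i j) = (\<Sum>j<n. 1 - (if j = i then 1 else 0) - adj E i j)"
    by (intro sum.cong) auto
  also have "\<dots> = real n - 1 - real (degree n E i)"
    using i by (simp add: sum_subtractf degree_eq_sum_adj)
  finally show ?thesis .
qed

lemma sum_degree:
  assumes sg: "simple_graph n E"
  shows "(\<Sum>i<n. real (degree n E i)) = 2 * real (num_edges n E)"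
proof -
  define U where "U = (\<Sum>i<n. \<Sum>j<n. if i < j then adj E i j else 0)"
  have U_eq: "U = real (num_edges n E)"
  proof -
    have "{(i, j). i < j \<and> j < n \<and> E i j} = {p \<in> {..<n} \<times> {..<n}. fst p < snd p \<and> E (fst p) (snd p)}"
      by auto
    then have "real (num_edges n E)
        = (\<Sum>p\<in>{p \<in> {..<n} \<times> {..<n}. fst p < snd p \<and> E (fst p) (snd p)}. 1)"
      unfolding num_edges_def by simp
    also have "\<dots> = (\<Sum>p\<in>{..<n} \<times> {..<n}. if fst p < snd p \<and> E (fst p) (snd p) then 1 else 0)"
      by (subst sum.inter_filter) auto
    finally show ?thesis
      unfolding U_def sum.cartesian_product by (auto simp: adj_def intro!: sum.cong)
  qed
  have "adj E i j = (if i < j then adj E i j else 0) + (if j < i then adj E j i else 0)"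
    if "i < n" "j < n" for i j
    using simple_graphD[OF sg that] simple_graphD[OF sg that(1) that(1)]
    by (cases i j rule: linorder_cases) (auto simp: adj_def)
  then have "(\<Sum>i<n. real (degree n E i))
      = U + (\<Sum>i<n. \<Sum>j<n. if j < i then adj E j i else 0)"
    unfolding U_def degree_eq_sum_adj by (simp add: sum.distrib[symmetric])
  also have "(\<Sum>i<n. \<Sum>j<n. if j < i then adj E j i else 0) = U"
    unfolding U_def by (rule sum.swap)
  finally show ?thesis using U_eq by simp
qed

lemma degree_le:
  assumes sg: "simple_graph n E" and i: "i < n"
  shows "real (degree n E i) \<le> real n - 1"
proof -
  have "{j. j < n \<and> E i j} \<subseteq> {..<n} - {i}" using simple_graphD[OF sg i] by auto
  then have "degree n E i \<le> card ({..<n} - {i})" unfolding degree_def by (intro card_mono) auto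
  then show ?thesis using i by simp
qed

lemma num_edges_le:
  assumes sg: "simple_graph n E"
  shows "2 * real (num_edges n E) \<le> real n * (real n - 1)"
proof -
  have "(\<Sum>i<n. real (degree n E i)) \<le> (\<Sum>i<n. real n - 1)"
    by (intro sum_mono degree_le[OF sg]) auto
  then show ?thesis using sum_degree[OF sg] by simp
qed

definition adj_non_adj :: "(nat \<Rightarrow> nat \<Rightarrow> bool) \<Rightarrow> nat \<Rightarrow> nat \<Rightarrow> nat \<Rightarrow> real" where
  "adj_non_adj E u v w = adj E u v * non_adj E u w"

lemma adj_non_adj_nonneg: "0 \<le> adj_non_adj E u v w"
  unfolding adj_non_adj_def adj_def non_adj_def by simp

lemma adj_non_adj_eq_0:
  assumes "simple_graph n E" "u < n" "\<not> distinct [u, v, w]"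
  shows "adj_non_adj E u v w = 0"
  using assms unfolding adj_non_adj_def adj_def non_adj_def simple_graph_def by auto

lemma sum_adj_non_adj:
  assumes sg: "simple_graph n E"
  shows "(\<Sum>u<n. \<Sum>v<n. \<Sum>w<n. adj_non_adj E u v w)
    = (\<Sum>u<n. real (degree n E u) * (real n - 1 - real (degree n E u)))"
  unfolding adj_non_adj_def sum_product[symmetric] degree_eq_sum_adj
  by (intro sum.cong refl) (simp add: sum_non_adj[OF sg] degree_eq_sum_adj)

text \<open>The double counting behind de Caen's inequality: an edge uv and a non-edge wx either
  share a vertex, or w is adjacent to u (a wedge at w), or it is not (a wedge at u).\<close>

lemma adj_mult_non_adj_le:
  assumes sg: "simple_graph n E" and "u < n" "v < n" "w < n" "x < n"
  shows "adj E u v * non_adj E w x \<le>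
     (if v \<notin> {u, w, x} \<and> distinct [u, w, x] then adj_non_adj E w u x else 0)
   + (if x \<notin> {u, v, w} \<and> distinct [u, v, w] then adj_non_adj E u v w else 0)
   + (if w = u then adj_non_adj E u v x else 0) + (if w = v then adj_non_adj E v u x else 0)
   + (if x = u then adj_non_adj E u v w else 0) + (if x = v then adj_non_adj E v u w else 0)"
    (is "_ \<le> ?T1 + ?T2 + ?T3 + ?T4 + ?T5 + ?T6")
proof -
  have nonneg: "?T1 \<ge> 0" "?T2 \<ge> 0" "?T3 \<ge> 0" "?T4 \<ge> 0" "?T5 \<ge> 0" "?T6 \<ge> 0"
    by (simp_all add: adj_non_adj_nonneg)
  show ?thesis
  proof (cases "E u v \<and> w \<noteq> x \<and> \<not> E w x")
    case False
    then have "adj E u v * non_adj E w x = 0" by (auto simp: adj_def non_adj_def)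
    with nonneg show ?thesis by linarith
  next
    case True
    then have "adj E u v * non_adj E w x = 1" by (simp add: adj_def non_adj_def)
    moreover have "?T1 = 1 \<or> ?T2 = 1 \<or> ?T3 = 1 \<or> ?T4 = 1 \<or> ?T5 = 1 \<or> ?T6 = 1"
      using True simple_graphD[OF sg] assms by (auto simp: adj_non_adj_def adj_def non_adj_def)
    ultimately show ?thesis using nonneg by linarith
  qed
qed

lemma sum_outside_three:
  fixes k :: real
  assumes "a < n" "b < n" "c < n" "distinct [a, b, c]"
  shows "(\<Sum>y<n. if y \<notin> {a, b, c} then k else 0) = (real n - 3) * k"
proof -
  have "(\<Sum>y<n. if y \<notin> {a, b, c} then k else 0) = (\<Sum>y\<in>{y \<in> {..<n}. y \<notin> {a, b, c}}. k)"
    by (subst sum.inter_filter) auto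
  also have "{y \<in> {..<n}. y \<notin> {a, b, c}} = {..<n} - {a, b, c}" by auto
  also have "card ({..<n} - {a, b, c}) = n - 3"
    using assms by (subst card_Diff_subset) auto
  moreover have "n \<ge> 3" using assms by (auto simp: distinct_card)
  ultimately show ?thesis by (simp add: of_nat_diff)
qed

lemma sum_outside_three_adj_non_adj:
  assumes sg: "simple_graph n E" and "a < n" "b < n" "c < n" "u < n"
    and "distinct [u, v, w] \<longleftrightarrow> distinct [a, b, c]"
  shows "(\<Sum>y<n. if y \<notin> {a, b, c} \<and> distinct [a, b, c] then adj_non_adj E u v w else 0)
    = (real n - 3) * adj_non_adj E u v w"
proof (cases "distinct [a, b, c]")
  case True
  then show ?thesis using sum_outside_three[OF assms(2-4)] by simp
next
  case False
  then have "\<not> distinct [u, v, w]" using assms(6) by simp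
  then show ?thesis using adj_non_adj_eq_0[OF sg assms(5)] False by simp
qed

lemma de_caen_counting:
  assumes sg: "simple_graph n E"
  shows "(\<Sum>u<n. \<Sum>v<n. \<Sum>w<n. \<Sum>x<n. adj E u v * non_adj E w x)
    \<le> 2 * (real n - 1) * (\<Sum>u<n. \<Sum>v<n. \<Sum>w<n. adj_non_adj E u v w)"
proof -
  let ?P = "adj_non_adj E"
  define L where "L = (\<Sum>u<n. \<Sum>v<n. \<Sum>w<n. ?P u v w)"
  have swap_L: "(\<Sum>u<n. \<Sum>v<n. \<Sum>w<n. ?P v u w) = L" unfolding L_def by (rule sum.swap)
  have T1: "(\<Sum>u<n. \<Sum>v<n. \<Sum>w<n. \<Sum>x<n.
      if v \<notin> {u, w, x} \<and> distinct [u, w, x] then ?P w u x else 0) = (real n - 3) * L"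
  proof -
    have "(\<Sum>u<n. \<Sum>v<n. \<Sum>w<n. \<Sum>x<n.
        if v \<notin> {u, w, x} \<and> distinct [u, w, x] then ?P w u x else 0)
      = (\<Sum>u<n. \<Sum>w<n. \<Sum>x<n. \<Sum>v<n.
        if v \<notin> {u, w, x} \<and> distinct [u, w, x] then ?P w u x else 0)"
      by (rule sum.cong[OF refl], subst sum.swap, rule sum.cong[OF refl], rule sum.swap)
    also have "\<dots> = (\<Sum>u<n. \<Sum>w<n. \<Sum>x<n. (real n - 3) * ?P w u x)"
      by (intro sum.cong refl sum_outside_three_adj_non_adj[OF sg]) auto
    also have "\<dots> = (real n - 3) * L"
      unfolding swap_L[symmetric] sum_distrib_left ..
    finally show ?thesis .
  qed
  have T2: "(\<Sum>u<n. \<Sum>v<n. \<Sum>w<n. \<Sum>x<n.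
      if x \<notin> {u, v, w} \<and> distinct [u, v, w] then ?P u v w else 0) = (real n - 3) * L"
    unfolding L_def sum_distrib_left by (intro sum.cong refl sum_outside_three_adj_non_adj[OF sg]) auto
  have delta_w: "(\<Sum>w<n. \<Sum>x<n. if w = a then g w x else 0) = (\<Sum>x<n. g a x)"
    if "a < n" for a and g :: "nat \<Rightarrow> nat \<Rightarrow> real"
    using that by (subst sum.swap) (simp add: sum.delta)
  have T3: "(\<Sum>u<n. \<Sum>v<n. \<Sum>w<n. \<Sum>x<n. if w = u then ?P u v x else 0) = L"
    unfolding L_def by (simp add: delta_w)
  have T4: "(\<Sum>u<n. \<Sum>v<n. \<Sum>w<n. \<Sum>x<n. if w = v then ?P v u x else 0) = L"
    using swap_L by (simp add: delta_w)
  have T5: "(\<Sum>u<n. \<Sum>v<n. \<Sum>w<n. \<Sum>x<n. if x = u then ?P u v w else 0) = L"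
    unfolding L_def by simp
  have T6: "(\<Sum>u<n. \<Sum>v<n. \<Sum>w<n. \<Sum>x<n. if x = v then ?P v u w else 0) = L"
    using swap_L by simp
  have "(\<Sum>u<n. \<Sum>v<n. \<Sum>w<n. \<Sum>x<n. adj E u v * non_adj E w x)
      \<le> (\<Sum>u<n. \<Sum>v<n. \<Sum>w<n. \<Sum>x<n.
        (if v \<notin> {u, w, x} \<and> distinct [u, w, x] then ?P w u x else 0)
      + (if x \<notin> {u, v, w} \<and> distinct [u, v, w] then ?P u v w else 0)
      + (if w = u then ?P u v x else 0) + (if w = v then ?P v u x else 0)
      + (if x = u then ?P u v w else 0) + (if x = v then ?P v u w else 0))"
    by (intro sum_mono adj_mult_non_adj_le[OF sg]) auto
  also have "\<dots> = 2 * (real n - 1) * L"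
    by (simp only: sum.distrib T1 T2 T3 T4 T5 T6) (simp add: algebra_simps)
  finally show ?thesis unfolding L_def .
qed

theorem de_caen_inequality:
  assumes sg: "simple_graph n E" and n: "n \<ge> 2"
  shows "(\<Sum>i<n. (real (degree n E i))\<^sup>2)
    \<le> real (num_edges n E) * (real n - 2) + 2 * (real (num_edges n E))\<^sup>2 / (real n - 1)"
proof -
  define N m S where "N = real n" and "m = real (num_edges n E)"
    and "S = (\<Sum>i<n. (real (degree n E i))\<^sup>2)"
  have deg_sum: "(\<Sum>i<n. real (degree n E i)) = 2 * m" using sum_degree[OF sg] m_def by simp
  have "(\<Sum>u<n. \<Sum>v<n. \<Sum>w<n. \<Sum>x<n. adj E u v * non_adj E w x)
      = (\<Sum>u<n. \<Sum>v<n. adj E u v) * (\<Sum>w<n. \<Sum>x<n. non_adj E w x)"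
    by (simp only: sum_distrib_right) (simp only: sum_distrib_left)
  also have "\<dots> = (\<Sum>u<n. real (degree n E u)) * (\<Sum>w<n. N - 1 - real (degree n E w))"
    unfolding degree_eq_sum_adj N_def by (simp add: sum_non_adj[OF sg] degree_eq_sum_adj)
  also have "\<dots> = 2 * m * (N * (N - 1) - 2 * m)"
    using deg_sum by (simp add: sum_subtractf N_def)
  finally have lhs: "(\<Sum>u<n. \<Sum>v<n. \<Sum>w<n. \<Sum>x<n. adj E u v * non_adj E w x)
      = 2 * m * (N * (N - 1) - 2 * m)" .
  have "(\<Sum>u<n. \<Sum>v<n. \<Sum>w<n. adj_non_adj E u v w)
      = (\<Sum>u<n. (N - 1) * real (degree n E u) - (real (degree n E u))\<^sup>2)"
    unfolding sum_adj_non_adj[OF sg] N_def by (simp add: power2_eq_square algebra_simps)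
  also have "\<dots> = (N - 1) * (2 * m) - S"
    unfolding S_def deg_sum[symmetric] by (simp add: sum_subtractf sum_distrib_left)
  finally have "(\<Sum>u<n. \<Sum>v<n. \<Sum>w<n. adj_non_adj E u v w) = (N - 1) * (2 * m) - S" .
  with de_caen_counting[OF sg] lhs
  have "2 * m * (N * (N - 1) - 2 * m) \<le> 2 * (N - 1) * ((N - 1) * (2 * m) - S)"
    by (simp add: N_def)
  then have "(N - 1) * S \<le> (N - 1) * (m * (N - 2)) + 2 * m\<^sup>2"
    by (simp add: power2_eq_square algebra_simps)
  moreover have "N - 1 > 0" using n N_def by simp
  ultimately show ?thesis
    unfolding S_def[symmetric] m_def[symmetric] N_def[symmetric] by (simp add: field_simps)
qed

lemma sum_sq_deviation:
  "(\<Sum>i\<in>A. (x i - a)\<^sup>2) = (\<Sum>i\<in>A. (x i)\<^sup>2) - 2 * a * (\<Sum>i\<in>A. x i) + real (card A) * a\<^sup>2"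
  for x :: "'a \<Rightarrow> real"
proof -
  have "(\<Sum>i\<in>A. (x i - a)\<^sup>2) = (\<Sum>i\<in>A. (x i)\<^sup>2 - 2 * a * x i + a\<^sup>2)"
    by (simp add: power2_eq_square algebra_simps)
  then show ?thesis
    by (simp add: sum.distrib sum_subtractf sum_distrib_left[symmetric] mult.assoc)
qed

lemma half_sq_diff_le_sum_sq_deviation:
  fixes x :: "'a \<Rightarrow> real"
  assumes "finite A" "p \<in> A" "q \<in> A"
  shows "(x p - x q)\<^sup>2 / 2 \<le> (\<Sum>i\<in>A. (x i - a)\<^sup>2)"
proof (cases "p = q")
  case False
  have "(x p - a)\<^sup>2 + (x q - a)\<^sup>2 = (x p - x q)\<^sup>2 / 2 + (x p + x q - 2 * a)\<^sup>2 / 2"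
    by (simp add: power2_eq_square field_simps)
  then have "(x p - x q)\<^sup>2 / 2 \<le> (\<Sum>i\<in>{p, q}. (x i - a)\<^sup>2)"
    using False by simp
  also have "\<dots> \<le> (\<Sum>i\<in>A. (x i - a)\<^sup>2)" using assms by (intro sum_mono2) auto
  finally show ?thesis .
qed (simp add: sum_nonneg)

lemma max_degree_attained:
  assumes "n \<ge> 1"
  obtains p where "p < n" "max_degree n E = degree n E p"
proof -
  have "max_degree n E \<in> degree n E ` {0..<n}"
    unfolding max_degree_def using assms by (intro Max_in) auto
  with that show thesis by auto
qed

lemma min_degree_attained:
  assumes "n \<ge> 1"
  obtains q where "q < n" "min_degree n E = degree n E q"
proof -
  have "min_degree n E \<in> degree n E ` {0..<n}"
    unfolding min_degree_def using assms by (intro Min_in) auto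
  with that show thesis by auto
qed

lemma degree_spread_le:
  assumes sg: "simple_graph n E" and n: "n \<ge> 1"
  shows "(real (max_degree n E) - real (min_degree n E))\<^sup>2 / 2
    \<le> (\<Sum>i<n. (real (degree n E i))\<^sup>2) - 4 * (real (num_edges n E))\<^sup>2 / real n"
proof -
  obtain p q where "p < n" "q < n"
    and pq: "max_degree n E = degree n E p" "min_degree n E = degree n E q"
    using max_degree_attained[OF n] min_degree_attained[OF n] by metis
  then have "(real (max_degree n E) - real (min_degree n E))\<^sup>2 / 2
      \<le> (\<Sum>i<n. (real (degree n E i) - 2 * real (num_edges n E) / real n)\<^sup>2)"
    by (simp only: pq) (intro half_sq_diff_le_sum_sq_deviation, auto)
  also have "\<dots> = (\<Sum>i<n. (real (degree n E i))\<^sup>2) - 4 * (real (num_edges n E))\<^sup>2 / real n"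
    using n unfolding sum_sq_deviation sum_degree[OF sg]
    by (simp add: power2_eq_square field_simps)
  finally show ?thesis .
qed

section \<open>Deviations of the signless Laplacian spectrum\<close>

lemma signless_laplacian_carrier: "signless_laplacian n E \<in> carrier_mat n n"
  unfolding signless_laplacian_def by simp

lemma signless_laplacian_index:
  "i < n \<Longrightarrow> j < n \<Longrightarrow>
    signless_laplacian n E $$ (i, j) = (if i = j then real (degree n E i) else 0) + adj E i j"
  unfolding signless_laplacian_def adj_def by simp

lemma signless_laplacian_symmetric:
  assumes "simple_graph n E" "i < n" "j < n"
  shows "signless_laplacian n E $$ (i, j) = signless_laplacian n E $$ (j, i)"
  using simple_graphD[OF assms] assms(2,3) by (simp add: signless_laplacian_index adj_def)

lemma mat_trace_signless_laplacian:
  assumes sg: "simple_graph n E"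
  shows "mat_trace (signless_laplacian n E) = 2 * real (num_edges n E)"
proof -
  have "mat_trace (signless_laplacian n E) = (\<Sum>i<n. real (degree n E i))"
    unfolding mat_trace_def using simple_graphD(2)[OF sg]
    by (intro sum.cong) (auto simp: signless_laplacian_index adj_def signless_laplacian_def)
  then show ?thesis using sum_degree[OF sg] by simp
qed

lemma mat_trace_signless_laplacian_square:
  assumes sg: "simple_graph n E"
  shows "mat_trace (signless_laplacian n E * signless_laplacian n E)
    = (\<Sum>i<n. (real (degree n E i))\<^sup>2) + 2 * real (num_edges n E)"
proof -
  have "(\<Sum>j<n. (signless_laplacian n E $$ (i, j))\<^sup>2) = (real (degree n E i))\<^sup>2 + real (degree n E i)"
    if i: "i < n" for i
  proof -
    have "(signless_laplacian n E $$ (i, j))\<^sup>2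
        = (if j = i then (real (degree n E i))\<^sup>2 else 0) + adj E i j" if "j < n" for j
      using i that simple_graphD(2)[OF sg i]
      by (auto simp: signless_laplacian_index adj_def power2_eq_square)
    then show ?thesis using i by (simp add: sum.distrib degree_eq_sum_adj)
  qed
  then show ?thesis
    using sum_degree[OF sg] signless_laplacian_symmetric[OF sg]
    by (simp add: mat_trace_square_symmetric[OF signless_laplacian_carrier] sum.distrib)
qed

lemma rev_sorted_list_of_multiset_last_le:
  assumes "y \<in># M"
  shows "rev (sorted_list_of_multiset M) ! (size M - 1) \<le> (y :: 'a::linorder)"
proof -
  define ys where "ys = sorted_list_of_multiset M"
  have len: "length ys = size M" unfolding ys_def by (metis mset_sorted_list_of_multiset size_mset)
  have "size M > 0" using assms by (metis insert_DiffM size_add_mset zero_less_Suc)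
  then have "rev ys ! (size M - 1) = ys ! 0" using len by (subst rev_nth) auto
  moreover obtain j where "j < length ys" "ys ! j = y"
    using assms unfolding ys_def by (metis in_set_conv_nth set_sorted_list_of_multiset)
  moreover have "sorted ys" unfolding ys_def by simp
  ultimately show ?thesis unfolding ys_def[symmetric] by (metis sorted_nth_mono zero_le)
qed

lemma sq_le_sum_sq_of_sum_eq_0:
  fixes \<mu> :: "nat \<Rightarrow> real"
  assumes n: "n \<ge> 2" and sum0: "(\<Sum>i<n. \<mu> i) = 0" and k: "k < n"
  shows "real n * (\<mu> k)\<^sup>2 \<le> (real n - 1) * (\<Sum>i<n. (\<mu> i)\<^sup>2)"
proof -
  define q where "q = real n - 1"
  have q: "q > 0" using n unfolding q_def by simp
  \<comment> \<open>shifting all entries by \<open>\<mu> k / q\<close> adds only \<open>n (\<mu> k / q)\<^sup>2\<close>, as they sum to zero\<close>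
  have "(\<mu> k + \<mu> k / q)\<^sup>2 \<le> (\<Sum>i<n. (\<mu> i + \<mu> k / q)\<^sup>2)"
    using k by (intro member_le_sum) auto
  also have "\<dots> = (\<Sum>i<n. (\<mu> i)\<^sup>2 + 2 * (\<mu> k / q) * \<mu> i + (\<mu> k / q)\<^sup>2)"
    by (simp add: power2_sum algebra_simps)
  also have "\<dots> = (\<Sum>i<n. (\<mu> i)\<^sup>2) + 2 * (\<mu> k / q) * (\<Sum>i<n. \<mu> i) + real n * (\<mu> k / q)\<^sup>2"
    by (simp add: sum.distrib sum_distrib_left)
  also have "\<dots> = (\<Sum>i<n. (\<mu> i)\<^sup>2) + (q + 1) * (\<mu> k / q)\<^sup>2"
    using sum0 unfolding q_def by simp
  finally have "q\<^sup>2 * (\<mu> k + \<mu> k / q)\<^sup>2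
      \<le> q\<^sup>2 * (\<Sum>i<n. (\<mu> i)\<^sup>2) + q\<^sup>2 * ((q + 1) * (\<mu> k / q)\<^sup>2)"
    by (simp add: distrib_left[symmetric] mult_left_mono)
  also have "q\<^sup>2 * (\<mu> k + \<mu> k / q)\<^sup>2 = (q + 1)\<^sup>2 * (\<mu> k)\<^sup>2"
    using q by (simp add: power2_eq_square field_simps)
  also have "q\<^sup>2 * ((q + 1) * (\<mu> k / q)\<^sup>2) = (q + 1) * (\<mu> k)\<^sup>2"
    using q by (simp add: power2_eq_square field_simps)
  finally have "q * ((q + 1) * (\<mu> k)\<^sup>2) \<le> q * (q * (\<Sum>i<n. (\<mu> i)\<^sup>2))"
    by (simp add: power2_eq_square algebra_simps)
  then show ?thesis using q unfolding q_def by simp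
qed

lemma sum_abs_ge_of_pinched:
  fixes \<mu> :: "nat \<Rightarrow> real" and t K :: real
  assumes t: "t > 0" and pinched: "\<forall>i<n. t \<le> \<bar>\<mu> i\<bar> \<and> \<bar>\<mu> i\<bar> \<le> 2 * t"
    and K: "0 \<le> K" "K \<le> (\<Sum>i<n. (\<mu> i)\<^sup>2)"
  shows "2 * sqrt 2 / 3 * sqrt (K * real n) \<le> (\<Sum>i<n. \<bar>\<mu> i\<bar>)"
    and "(\<Sum>i<n. \<bar>\<mu> i\<bar>) = 2 * sqrt 2 / 3 * sqrt (K * real n) \<Longrightarrow>
      K = (\<Sum>i<n. (\<mu> i)\<^sup>2) \<and> K = 2 * real n * t\<^sup>2"
proof -
  define M Q N R where "M = (\<Sum>i<n. (\<mu> i)\<^sup>2)" and "Q = (\<Sum>i<n. \<bar>\<mu> i\<bar>)" and "N = real n"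
    and "R = 2 * sqrt 2 / 3 * sqrt (K * real n)"
  have "(\<mu> i)\<^sup>2 \<le> 3 * t * \<bar>\<mu> i\<bar> - 2 * t\<^sup>2" if "i < n" for i
  proof -
    have "0 \<le> (\<bar>\<mu> i\<bar> - t) * (2 * t - \<bar>\<mu> i\<bar>)" using pinched that by simp
    then show ?thesis by (simp add: power2_eq_square algebra_simps)
  qed
  then have "M \<le> (\<Sum>i<n. 3 * t * \<bar>\<mu> i\<bar> - 2 * t\<^sup>2)" unfolding M_def by (intro sum_mono) auto
  also have "\<dots> = 3 * t * Q - 2 * N * t\<^sup>2" unfolding Q_def N_def by (simp add: sum_subtractf sum_distrib_left)
  finally have "(M + 2 * N * t\<^sup>2)\<^sup>2 \<le> (3 * t * Q)\<^sup>2"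
    using K unfolding M_def N_def by (intro power_mono) auto
  \<comment> \<open>AM-GM for \<open>M\<close> and \<open>2 N t\<^sup>2\<close>, kept with its gap to read off the equality case\<close>
  then have gap: "(M - 2 * N * t\<^sup>2)\<^sup>2 \<le> t\<^sup>2 * (9 * Q\<^sup>2 - 8 * N * M)"
    by (simp add: power2_eq_square algebra_simps)
  then have "0 \<le> t\<^sup>2 * (9 * Q\<^sup>2 - 8 * N * M)" by (meson order_trans zero_le_power2)
  then have "8 * N * M \<le> 9 * Q\<^sup>2" using t by (simp add: zero_le_mult_iff)
  moreover have R2: "9 * R\<^sup>2 = 8 * N * K"
  proof -
    have "(sqrt (K * real n))\<^sup>2 = K * real n" using K by simp
    then show ?thesis unfolding R_def N_def by (simp add: power_mult_distrib power_divide)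
  qed
  moreover have "8 * N * K \<le> 8 * N * M" using K unfolding M_def N_def by (intro mult_left_mono) auto
  ultimately have "R\<^sup>2 \<le> Q\<^sup>2" by linarith
  then show "R \<le> Q" unfolding Q_def by (rule power2_le_imp_le) (simp add: sum_nonneg)
  assume "Q = R"
  then have "8 * N * M \<le> 8 * N * K" using \<open>8 * N * M \<le> 9 * Q\<^sup>2\<close> R2 by simp
  then have "K = M" using K unfolding M_def N_def by (cases "n = 0") auto
  with gap R2 \<open>Q = R\<close> have "(M - 2 * N * t\<^sup>2)\<^sup>2 \<le> 0" by simp
  then show "K = (\<Sum>i<n. (\<mu> i)\<^sup>2) \<and> K = 2 * real n * t\<^sup>2" using \<open>K = M\<close> unfolding M_def N_def by simp
qed

lemma sum_abs_three_le:
  fixes a b c t :: real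
  assumes "a + b + c = 0" "\<bar>a\<bar> \<le> 2 * t" "\<bar>b\<bar> \<le> 2 * t" "\<bar>c\<bar> \<le> 2 * t"
    "t \<le> \<bar>a\<bar>" "t \<le> \<bar>b\<bar>" "t \<le> \<bar>c\<bar>"
  shows "\<bar>a\<bar> + \<bar>b\<bar> + \<bar>c\<bar> \<le> 4 * t"
  using assms by arith

definition sl_sq_deviation :: "nat \<Rightarrow> (nat \<Rightarrow> nat \<Rightarrow> bool) \<Rightarrow> real" where
  "sl_sq_deviation n E = (\<Sum>i<n. (real (degree n E i))\<^sup>2) + 2 * real (num_edges n E)
     - 4 * (real (num_edges n E))\<^sup>2 / real n"

definition sl_sq_deviation_bound :: "nat \<Rightarrow> nat \<Rightarrow> real" where
  "sl_sq_deviation_bound n m = real m * ((real n)^3 - (real n)^2 - 2 * real m * real n + 4 * real m)"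

lemma sl_sq_deviation_lower:
  assumes "simple_graph n E" "n \<ge> 1"
  shows "2 * real (num_edges n E) + (real (max_degree n E) - real (min_degree n E))\<^sup>2 / 2
    \<le> sl_sq_deviation n E"
  using degree_spread_le[OF assms] unfolding sl_sq_deviation_def by simp

lemma sl_sq_deviation_upper:
  assumes sg: "simple_graph n E" and n: "n \<ge> 2"
  shows "sl_sq_deviation n E * (real n * (real n - 1)) \<le> sl_sq_deviation_bound n (num_edges n E)"
proof -
  define N m where "N = real n" and "m = real (num_edges n E)"
  have N: "N \<ge> 2" using n N_def by simp
  define S where "S = (\<Sum>i<n. (real (degree n E i))\<^sup>2)"
  have "S * (N * (N - 1)) \<le> (m * (N - 2) + 2 * m\<^sup>2 / (N - 1)) * (N * (N - 1))"
    using de_caen_inequality[OF sg n] N unfolding N_def m_def S_def by (intro mult_right_mono) auto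
  also have "\<dots> = m * (N - 2) * N * (N - 1) + 2 * m\<^sup>2 * N" using N by (simp add: field_simps)
  finally have "S * (N * (N - 1)) \<le> m * (N - 2) * N * (N - 1) + 2 * m\<^sup>2 * N" .
  moreover have "sl_sq_deviation n E * (N * (N - 1))
      = S * (N * (N - 1)) + 2 * m * N * (N - 1) - 4 * m\<^sup>2 * (N - 1)"
    unfolding sl_sq_deviation_def N_def m_def S_def using N N_def by (simp add: field_simps)
  moreover have "sl_sq_deviation_bound n (num_edges n E)
      = m * (N - 2) * N * (N - 1) + 2 * m\<^sup>2 * N + 2 * m * N * (N - 1) - 4 * m\<^sup>2 * (N - 1)"
    unfolding sl_sq_deviation_bound_def N_def m_def by (simp add: power2_eq_square power3_eq_cube algebra_simps)
  ultimately show ?thesis unfolding N_def by linarith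
qed

lemma sl_sq_deviation_bound_pos:
  assumes sg: "simple_graph n E" and n: "n \<ge> 2" and m: "num_edges n E \<ge> 1"
  shows "sl_sq_deviation_bound n (num_edges n E) > 0"
proof -
  define N m where "N = real n" and "m = real (num_edges n E)"
  have "2 * m * (N - 2) \<le> N * (N - 1) * (N - 2)"
    using num_edges_le[OF sg] n unfolding N_def m_def by (intro mult_right_mono) auto
  then have "N\<^sup>2 * (N - 1) - 2 * m * (N - 2) \<ge> 2 * N * (N - 1)"
    by (simp add: power2_eq_square algebra_simps)
  moreover have "2 * N * (N - 1) > 0" "m > 0" using n m unfolding N_def m_def by auto
  ultimately have "m * (N\<^sup>2 * (N - 1) - 2 * m * (N - 2)) > 0" by simp
  then show ?thesis
    unfolding sl_sq_deviation_bound_def N_def[symmetric] m_def[symmetric]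
    by (simp add: power2_eq_square power3_eq_cube algebra_simps)
qed

lemma sl_eigenvalue_deviations:
  assumes sg: "simple_graph n E" and n: "n \<ge> 1"
  obtains \<mu> :: "nat \<Rightarrow> real" where "QE n E = (\<Sum>i<n. \<bar>\<mu> i\<bar>)" "(\<Sum>i<n. \<mu> i) = 0"
    "(\<Sum>i<n. (\<mu> i)\<^sup>2) = sl_sq_deviation n E" "\<forall>i<n. gamma n E n \<le> \<bar>\<mu> i\<bar>"
proof -
  define m a where "m = real (num_edges n E)" and "a = 2 * m / real n"
  obtain rs where spec: "sl_eigenvalues n E = mset rs" and len: "length rs = n"
    and sum1: "sum_list rs = 2 * m" and sum2: "(\<Sum>r\<leftarrow>rs. r\<^sup>2) = (\<Sum>i<n. (real (degree n E i))\<^sup>2) + 2 * m"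
    using symmetric_real_mat_spectrum[OF signless_laplacian_carrier signless_laplacian_symmetric[OF sg]]
    unfolding sl_eigenvalues_def mat_trace_signless_laplacian[OF sg]
      mat_trace_signless_laplacian_square[OF sg] m_def by metis
  define \<mu> where "\<mu> i = rs ! i - a" for i
  have sum_rs: "(\<Sum>i<n. f (rs ! i)) = (\<Sum>r\<leftarrow>rs. f r)" for f :: "real \<Rightarrow> real"
    unfolding sum_list_sum_nth by (simp add: len atLeast0LessThan)
  have "QE n E = (\<Sum>i<n. \<bar>\<mu> i\<bar>)"
    using sum_rs[of "\<lambda>r. \<bar>r - a\<bar>"] unfolding QE_def gamma_mset_def spec \<mu>_def a_def m_def
    by (simp add: sum_mset_sum_list flip: mset_map)
  moreover have "(\<Sum>i<n. \<mu> i) = 0"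
    unfolding \<mu>_def a_def using n by (simp add: sum_subtractf sum_rs[of id, simplified] sum1)
  moreover have "(\<Sum>i<n. (\<mu> i)\<^sup>2) = (\<Sum>r\<leftarrow>rs. r\<^sup>2) - 2 * a * sum_list rs + real n * a\<^sup>2"
    unfolding \<mu>_def sum_sq_deviation using sum_rs[of id] sum_rs[of power2] by simp
  moreover have "\<dots> = sl_sq_deviation n E"
    unfolding sum1 sum2 sl_sq_deviation_def a_def m_def using n by (simp add: power2_eq_square field_simps)
  moreover have "gamma n E n \<le> \<bar>\<mu> i\<bar>" if "i < n" for i
  proof -
    have "size (gamma_mset n E) = n" unfolding gamma_mset_def spec using len by simp
    moreover have "\<bar>\<mu> i\<bar> \<in># gamma_mset n E"
      unfolding gamma_mset_def spec \<mu>_def a_def m_def using that len by simp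
    ultimately show ?thesis
      unfolding gamma_def by (metis rev_sorted_list_of_multiset_last_le)
  qed
  ultimately show thesis using that by auto
qed

lemma sl_deviation_abs_le:
  fixes \<mu> :: "nat \<Rightarrow> real"
  assumes sg: "simple_graph n E" and n: "n \<ge> 2" and k: "k < n" and sum0: "(\<Sum>i<n. \<mu> i) = 0"
    and sq: "(\<Sum>i<n. (\<mu> i)\<^sup>2) = sl_sq_deviation n E"
  shows "real n * \<bar>\<mu> k\<bar> \<le> sqrt (sl_sq_deviation_bound n (num_edges n E))"
proof (rule real_le_rsqrt)
  have "(real n * \<bar>\<mu> k\<bar>)\<^sup>2 = real n * (real n * (\<mu> k)\<^sup>2)" by (simp add: power2_eq_square)
  also have "\<dots> \<le> real n * ((real n - 1) * sl_sq_deviation n E)"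
    using sq_le_sum_sq_of_sum_eq_0[OF n sum0 k] sq by (intro mult_left_mono) auto
  also have "\<dots> \<le> sl_sq_deviation_bound n (num_edges n E)"
    using sl_sq_deviation_upper[OF sg n] by (simp add: algebra_simps)
  finally show "(real n * \<bar>\<mu> k\<bar>)\<^sup>2 \<le> sl_sq_deviation_bound n (num_edges n E)" .
qed

lemma sl_eigenvalue_deviations_pinched:
  assumes sg: "simple_graph n E" and n: "n \<ge> 2"
  defines "t \<equiv> sqrt (sl_sq_deviation_bound n (num_edges n E)) / (2 * real n)"
  assumes gamma: "t \<le> gamma n E n"
  obtains \<mu> :: "nat \<Rightarrow> real" where "QE n E = (\<Sum>i<n. \<bar>\<mu> i\<bar>)" "(\<Sum>i<n. \<mu> i) = 0"
    "(\<Sum>i<n. (\<mu> i)\<^sup>2) = sl_sq_deviation n E" "\<forall>i<n. t \<le> \<bar>\<mu> i\<bar> \<and> \<bar>\<mu> i\<bar> \<le> 2 * t"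
proof -
  obtain \<mu> where QE: "QE n E = (\<Sum>i<n. \<bar>\<mu> i\<bar>)" and sum0: "(\<Sum>i<n. \<mu> i) = 0"
    and sq: "(\<Sum>i<n. (\<mu> i)\<^sup>2) = sl_sq_deviation n E" and ge: "\<forall>i<n. gamma n E n \<le> \<bar>\<mu> i\<bar>"
    using sl_eigenvalue_deviations[OF sg] n by (metis one_le_numeral order_trans)
  have "\<bar>\<mu> i\<bar> \<le> 2 * t" if "i < n" for i
    using sl_deviation_abs_le[OF sg n that sum0 sq] n unfolding t_def by (simp add: field_simps)
  with ge gamma have "\<forall>i<n. t \<le> \<bar>\<mu> i\<bar> \<and> \<bar>\<mu> i\<bar> \<le> 2 * t" by (auto intro: order_trans)
  with QE sum0 sq that show thesis by blast
qed

section \<open>The equality case\<close>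

lemma graph_iso_complete_graph_iff:
  "graph_iso n E k complete_graph \<longleftrightarrow> n = k \<and> (\<forall>i<n. \<forall>j<n. E i j \<longleftrightarrow> i \<noteq> j)"
proof
  assume "graph_iso n E k complete_graph"
  then obtain f where f: "bij_betw f {0..<n} {0..<k}"
    and fE: "\<forall>i<n. \<forall>j<n. E i j \<longleftrightarrow> f i \<noteq> f j"
    unfolding graph_iso_def complete_graph_def by blast
  have "inj_on f {0..<n}" using f by (rule bij_betw_imp_inj_on)
  then have "E i j \<longleftrightarrow> i \<noteq> j" if "i < n" "j < n" for i j
    using fE that by (auto dest: inj_onD)
  then show "n = k \<and> (\<forall>i<n. \<forall>j<n. E i j \<longleftrightarrow> i \<noteq> j)"
    using bij_betw_same_card[OF f] by simp
next
  assume "n = k \<and> (\<forall>i<n. \<forall>j<n. E i j \<longleftrightarrow> i \<noteq> j)"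
  then show "graph_iso n E k complete_graph"
    unfolding graph_iso_def complete_graph_def by (intro exI[of _ id]) auto
qed

lemma complete_graph_degrees:
  assumes complete: "\<forall>i<n. \<forall>j<n. E i j \<longleftrightarrow> i \<noteq> j" and n: "n \<ge> 1"
  shows "2 * num_edges n E = n * (n - 1)" "max_degree n E = n - 1" "min_degree n E = n - 1"
proof -
  have sg: "simple_graph n E" using complete unfolding simple_graph_def by auto
  have deg: "degree n E i = n - 1" if "i < n" for i
  proof -
    have "{j. j < n \<and> E i j} = {..<n} - {i}" using complete that by auto
    then show ?thesis unfolding degree_def using that by simp
  qed
  have "real (2 * num_edges n E) = real (n * (n - 1))" using sum_degree[OF sg] deg n by (simp add: of_nat_diff)
  then show "2 * num_edges n E = n * (n - 1)" by (simp only: of_nat_eq_iff)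
  have "degree n E ` {0..<n} = (\<lambda>_. n - 1) ` {0..<n}" using deg by (intro image_cong) auto
  also have "\<dots> = {n - 1}" using n by (auto intro!: image_eqI[of _ _ 0])
  finally show "max_degree n E = n - 1" "min_degree n E = n - 1"
    unfolding max_degree_def min_degree_def by simp_all
qed

lemma three_vertex_sq_deviation_case:
  fixes x y z D d :: real
  assumes "x \<in> {0, 1}" "y \<in> {0, 1}" "z \<in> {0, 1}" "1 \<le> x + y + z"
    and "x + y \<le> D" "x + z \<le> D" "y + z \<le> D" "D = x + y \<or> D = x + z \<or> D = y + z"
    and "d \<le> x + y" "d \<le> x + z" "d \<le> y + z" "d = x + y \<or> d = x + z \<or> d = y + z"
    and "(x + y)\<^sup>2 + (x + z)\<^sup>2 + (y + z)\<^sup>2 + 2 * (x + y + z) - 4 * (x + y + z)\<^sup>2 / 3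
      = 2 * (x + y + z) + (D - d)\<^sup>2 / 2"
  shows "x = 1 \<and> y = 1 \<and> z = 1"
  using assms by (auto simp: power2_eq_square)

lemma complete_if_sl_sq_deviation_eq:
  assumes sg: "simple_graph 3 E" and m: "num_edges 3 E \<ge> 1"
    and eq: "sl_sq_deviation 3 E
      = 2 * real (num_edges 3 E) + (real (max_degree 3 E) - real (min_degree 3 E))\<^sup>2 / 2"
  shows "\<forall>i<3. \<forall>j<3. E i j \<longleftrightarrow> i \<noteq> j"
proof -
  define x y z where "x = adj E 0 1" and "y = adj E 0 2" and "z = adj E 1 2"
  have lt3: "i < 3 \<longleftrightarrow> i = 0 \<or> i = 1 \<or> i = 2" for i :: nat by auto
  have sum3: "(\<Sum>i<(3::nat). f i) = f 0 + f 1 + (f 2 :: real)" for f by (simp add: eval_nat_numeral)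
  have deg: "real (degree 3 E 0) = x + y" "real (degree 3 E 1) = x + z" "real (degree 3 E 2) = y + z"
    unfolding degree_eq_sum_adj sum3 x_def y_def z_def
    using simple_graphD[OF sg, of 0 1] simple_graphD[OF sg, of 0 2] simple_graphD[OF sg, of 1 2]
      simple_graphD[OF sg, of 1 0] simple_graphD[OF sg, of 2 2]
    by (auto simp: adj_def)
  have m_eq: "real (num_edges 3 E) = x + y + z" using sum_degree[OF sg] deg by (simp add: sum3)
  obtain p q where "p < 3" "q < 3"
    and pq: "max_degree 3 E = degree 3 E p" "min_degree 3 E = degree 3 E q"
    using max_degree_attained min_degree_attained by (metis one_le_numeral)
  have le_max: "real (degree 3 E i) \<le> real (max_degree 3 E)"
    and min_le: "real (min_degree 3 E) \<le> real (degree 3 E i)" if "i < 3" for i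
    unfolding max_degree_def min_degree_def using that by auto
  have "x = 1 \<and> y = 1 \<and> z = 1"
  proof (rule three_vertex_sq_deviation_case)
    show "x \<in> {0, 1}" "y \<in> {0, 1}" "z \<in> {0, 1}" by (simp_all add: x_def y_def z_def adj_def)
    show "1 \<le> x + y + z" using m m_eq by simp
    show "x + y \<le> real (max_degree 3 E)" "x + z \<le> real (max_degree 3 E)"
      "y + z \<le> real (max_degree 3 E)"
      using le_max[of 0] le_max[of 1] le_max[of 2] deg by simp_all
    show "real (min_degree 3 E) \<le> x + y" "real (min_degree 3 E) \<le> x + z"
      "real (min_degree 3 E) \<le> y + z"
      using min_le[of 0] min_le[of 1] min_le[of 2] deg by simp_all
    show "real (max_degree 3 E) = x + y \<or> real (max_degree 3 E) = x + z
        \<or> real (max_degree 3 E) = y + z"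
      using \<open>p < 3\<close> pq(1) deg by (auto simp: lt3)
    show "real (min_degree 3 E) = x + y \<or> real (min_degree 3 E) = x + z
        \<or> real (min_degree 3 E) = y + z"
      using \<open>q < 3\<close> pq(2) deg by (auto simp: lt3)
    show "(x + y)\<^sup>2 + (x + z)\<^sup>2 + (y + z)\<^sup>2 + 2 * (x + y + z) - 4 * (x + y + z)\<^sup>2 / 3
      = 2 * (x + y + z) + (real (max_degree 3 E) - real (min_degree 3 E))\<^sup>2 / 2"
      using eq unfolding sl_sq_deviation_def sum3 deg m_eq by simp
  qed
  then show ?thesis
    using simple_graphD[OF sg] unfolding x_def y_def z_def adj_def lt3
    by (auto split: if_splits)
qed

lemma order_eq_3_if_sl_sq_deviation_eq:
  assumes sg: "simple_graph n E" and n: "n \<ge> 2" and m: "num_edges n E \<ge> 1"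
    and eq: "sl_sq_deviation n E = sl_sq_deviation_bound n (num_edges n E) / (2 * real n)"
  shows "n = 3"
proof -
  define C where "C = sl_sq_deviation_bound n (num_edges n E)"
  have C: "C > 0" using sl_sq_deviation_bound_pos[OF sg n m] C_def by simp
  have "C * (real n - 1) / 2 = C / (2 * real n) * (real n * (real n - 1))" using n by simp
  also have "\<dots> \<le> C" using sl_sq_deviation_upper[OF sg n] eq C_def by simp
  finally have "C * (real n - 1) \<le> C * 2" by simp
  then have "real n - 1 \<le> 2" using C by (simp only: mult_le_cancel_left_pos)
  then have "n \<le> 3" by simp
  have "2 * real (num_edges n E) \<le> C / (2 * real n)"
    using order_trans[OF _ sl_sq_deviation_lower[OF sg]] n eq C_def by simp
  then have "n \<noteq> 2" using m unfolding C_def sl_sq_deviation_bound_def by auto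
  with \<open>n \<le> 3\<close> n show "n = 3" by simp
qed

theorem mainTheorem8:
  fixes n :: nat and E :: "nat \<Rightarrow> nat \<Rightarrow> bool"
  defines "m \<equiv> num_edges n E"
  defines "c \<equiv> real m * ((real n)^3 - (real n)^2 - 2 * real m * real n + 4 * real m)"
  assumes "simple_graph n E" and "connected_graph n E"
    and "n \<ge> 2" and "m \<ge> 1"
    and "gamma n E n \<ge> sqrt c / (2 * real n)"
  shows "QE n E \<ge> 2 * sqrt 2 / 3 *
            sqrt ((2 * real m + (real (max_degree n E) - real (min_degree n E))^2 / 2) * real n)
       \<and> (QE n E = 2 * sqrt 2 / 3 *
            sqrt ((2 * real m + (real (max_degree n E) - real (min_degree n E))^2 / 2) * real n)
          \<longleftrightarrow> graph_iso n E 3 complete_graph)"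
proof -
  note sg = assms(3) and n = assms(5) and m = assms(6)[unfolded m_def]
  define K where "K = 2 * real m + (real (max_degree n E) - real (min_degree n E))\<^sup>2 / 2"
  define t where "t = sqrt c / (2 * real n)"
  have c: "c = sl_sq_deviation_bound n (num_edges n E)"
    unfolding c_def m_def sl_sq_deviation_bound_def ..
  have "c > 0" using sl_sq_deviation_bound_pos[OF sg n m] unfolding c .
  then have t: "t > 0" and t_sq: "2 * real n * t\<^sup>2 = c / (2 * real n)"
    using n unfolding t_def by (simp_all add: power_divide power_mult_distrib power2_eq_square)
  obtain \<mu> where QE_eq: "QE n E = (\<Sum>i<n. \<bar>\<mu> i\<bar>)" and sum0: "(\<Sum>i<n. \<mu> i) = 0"
    and sq: "(\<Sum>i<n. (\<mu> i)\<^sup>2) = sl_sq_deviation n E"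
    and pinched: "\<forall>i<n. t \<le> \<bar>\<mu> i\<bar> \<and> \<bar>\<mu> i\<bar> \<le> 2 * t"
    using sl_eigenvalue_deviations_pinched[OF sg n assms(7)[unfolded c]] unfolding t_def c by metis
  have K: "0 \<le> K" "K \<le> (\<Sum>i<n. (\<mu> i)\<^sup>2)"
    using sl_sq_deviation_lower[OF sg] n unfolding sq K_def m_def by auto
  note energy = sum_abs_ge_of_pinched[OF t pinched K, folded QE_eq]
  have "QE n E = 2 * sqrt 2 / 3 * sqrt (K * real n) \<longleftrightarrow> graph_iso n E 3 complete_graph"
  proof
    assume "QE n E = 2 * sqrt 2 / 3 * sqrt (K * real n)"
    with energy(2) sq t_sq c order_eq_3_if_sl_sq_deviation_eq[OF sg n m]
    have "n = 3" "sl_sq_deviation n E = K" by auto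
    with complete_if_sl_sq_deviation_eq sg m show "graph_iso n E 3 complete_graph"
      unfolding graph_iso_complete_graph_iff K_def m_def by simp
  next
    assume "graph_iso n E 3 complete_graph"
    then have n3: "n = 3" and complete: "\<forall>i<n. \<forall>j<n. E i j \<longleftrightarrow> i \<noteq> j"
      unfolding graph_iso_complete_graph_iff by auto
    with complete_graph_degrees[OF complete] have "m = 3" "max_degree n E = 2" "min_degree n E = 2"
      unfolding m_def by auto
    then have "K = 6" and "t = 1" unfolding K_def t_def c_def n3 by simp_all
    moreover have "sqrt (6 * 3) = 3 * sqrt 2" using real_sqrt_mult[of "3\<^sup>2" 2] by simp
    moreover have "\<bar>\<mu> 0\<bar> + \<bar>\<mu> 1\<bar> + \<bar>\<mu> 2\<bar> \<le> 4 * t"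
      using sum0 pinched n3 by (intro sum_abs_three_le) (auto simp: eval_nat_numeral)
    ultimately show "QE n E = 2 * sqrt 2 / 3 * sqrt (K * real n)"
      using energy(1) QE_eq n3 by (simp add: eval_nat_numeral)
  qed
  with energy(1) show ?thesis unfolding K_def by simp
qed

end
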